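(* Let $n\ge 1$ and write $[i,j]=\{i,i+1,\dots,j\}\subseteq[n]$ for $i\le j$. The rowmotion orbits on $\mathcal{IC}([n])$ are exactly: (a) the orbit $\{\emptyset,[n]\}$ of size $2$ (with $\mathrm{Row}(\emptyset)=[n]$, $\mathrm{Row}([n])=\emptyset$); (b) for each integer $k$ with $1\le k<\frac n2$ (there are $\lfloor\frac{n-1}{2}\rfloor$ of them), an orbit of size $n+2$, \[\{[1,k],[2,k+1],\dots,[n-k+1,n],[1,n-k],[2,n-k+1],\dots,[k+1,n]\},\] in which $\mathrm{Row}$ maps each listed set to the next one and $[k+1,n]$ back to $[1,k]$; concretely, $\mathrm{Row}([i,j])=[i+1,j+1]$ for $j<n$ and $\mathrm{Row}([i,n])=[1,i-1]$ for $i\ge 2$; (c) when $n$ is even, one further orbit $\{[1,\frac n2],[2,\frac n2+1],\dots,[\frac n2+1,n]\}$ of size $\frac{n+2}{2}$. Consequently the order of rowmotion on $\mathcal{IC}([n])$ divides $2(n+2)$ when $n$ is odd and divides $n+2$ when $n$ is even.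
   Context: $[n]$ denotes the chain poset $1<2<\cdots<n$. All posets are finite. For a poset $P$, a subset $I\subseteq P$ is interval-closed if for all $x,y\in I$ and $z\in P$ with $x\le z\le y$ we have $z\in I$; $\mathcal{IC}(P)$ is the set of interval-closed subsets of $P$. For $x\in P$ the toggle $t_x:\mathcal{IC}(P)\to\mathcal{IC}(P)$ is defined by $t_x(I)=I\triangle\{x\}$ if $I\triangle\{x\}\in\mathcal{IC}(P)$ and $t_x(I)=I$ otherwise. Rowmotion is $\mathrm{Row}=t_{x_1}\circ t_{x_2}\circ\cdots\circ t_{x_N}:\mathcal{IC}(P)\to\mathcal{IC}(P)$, where $(x_1,\dots,x_N)$ is a linear extension of $P$ (so elements are toggled from the top of the poset down). The order of rowmotion is the least common multiple of its orbit sizes. *)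

theory Defs
  imports Main
begin

definition interval_closed :: "'a set \<Rightarrow> ('a \<Rightarrow> 'a \<Rightarrow> bool) \<Rightarrow> 'a set \<Rightarrow> bool" where
  "interval_closed P le I \<longleftrightarrow>
     I \<subseteq> P \<and> (\<forall>x\<in>I. \<forall>y\<in>I. \<forall>z\<in>P. le x z \<and> le z y \<longrightarrow> z \<in> I)"

definition IC :: "'a set \<Rightarrow> ('a \<Rightarrow> 'a \<Rightarrow> bool) \<Rightarrow> 'a set set" where
  "IC P le = {I. interval_closed P le I}"

definition symdiff :: "'a set \<Rightarrow> 'a set \<Rightarrow> 'a set" where
  "symdiff A B = (A - B) \<union> (B - A)"

definition toggle :: "'a set \<Rightarrow> ('a \<Rightarrow> 'a \<Rightarrow> bool) \<Rightarrow> 'a \<Rightarrow> 'a set \<Rightarrow> 'a set" where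
  "toggle P le x I = (if interval_closed P le (symdiff I {x}) then symdiff I {x} else I)"

text \<open>Rowmotion w.r.t. a linear extension xs = [x1,...,xN]:
  Row = t_x1 o t_x2 o ... o t_xN (so x_N is toggled first).\<close>
definition rowmotion :: "'a set \<Rightarrow> ('a \<Rightarrow> 'a \<Rightarrow> bool) \<Rightarrow> 'a list \<Rightarrow> 'a set \<Rightarrow> 'a set" where
  "rowmotion P le xs = foldr (\<lambda>x f. toggle P le x \<circ> f) xs id"

definition chain_row :: "nat \<Rightarrow> nat set \<Rightarrow> nat set" where
  "chain_row n = rowmotion {1..n} (\<le>) [1..<n+1]"

definition orbit_of :: "('b \<Rightarrow> 'b) \<Rightarrow> 'b \<Rightarrow> 'b set" where
  "orbit_of f x = {(f ^^ m) x | m. True}"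

definition orbits :: "('b \<Rightarrow> 'b) \<Rightarrow> 'b set \<Rightarrow> 'b set set" where
  "orbits f S = orbit_of f ` S"

definition map_order :: "('b \<Rightarrow> 'b) \<Rightarrow> 'b set \<Rightarrow> nat" where
  "map_order f S = Lcm (card ` orbits f S)"

definition orbit_b :: "nat \<Rightarrow> nat \<Rightarrow> nat set set" where
  "orbit_b n k = {{i..i+k-1} | i. 1 \<le> i \<and> i + k - 1 \<le> n}
              \<union> {{i..i+(n-k)-1} | i. 1 \<le> i \<and> i + (n-k) - 1 \<le> n}"

definition orbit_c :: "nat \<Rightarrow> nat set set" where
  "orbit_c n = {{i..i + n div 2 - 1} | i. 1 \<le> i \<and> i + n div 2 - 1 \<le> n}"

end

theory Submission
  imports Defs
begin

text \<open>
  On the chain every interval-closed set is empty or an interval \<open>[a,b]\<close>. Toggling from the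
  top down, an interval \<open>[i,j]\<close> with \<open>j < n\<close> first gains \<open>j+1\<close> and then loses \<open>i\<close>, all other
  toggles being blocked, so rowmotion shifts it up by one; an interval \<open>[i,n]\<close> is emptied by the
  toggles from \<open>n\<close> down to \<open>i\<close>, and the remaining toggles fill in \<open>[1,i-1]\<close>. Hence the
  intervals of length \<open>L\<close> are shifted to the top and wrapped around to the intervals of length
  \<open>n-L\<close> and back: for \<open>L \<noteq> n-L\<close> they form one orbit of \<open>(n+1-L) + (L+1) = n+2\<close> sets, for
  \<open>L = n/2\<close> one orbit of \<open>n/2 + 1\<close> sets, while \<open>\<emptyset>\<close> and \<open>[n]\<close> are swapped.
\<close>

lemma interval_closedD:
  "interval_closed P le I \<Longrightarrow> x \<in> I \<Longrightarrow> y \<in> I \<Longrightarrow> z \<in> P \<Longrightarrow> le x z \<Longrightarrow> le z y \<Longrightarrow> z \<in> I"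
  unfolding interval_closed_def by blast

lemma symdiff_singleton: "symdiff I {x} = (if x \<in> I then I - {x} else insert x I)"
  unfolding symdiff_def by auto

lemma toggle_eq_symdiff:
  "interval_closed P le (symdiff I {x}) \<Longrightarrow> toggle P le x I = symdiff I {x}"
  by (simp add: toggle_def)

lemma toggle_eq_self_if_gap:
  assumes "u \<in> symdiff I {x}" "v \<in> symdiff I {x}" "z \<in> P" "le u z" "le z v" "z \<notin> symdiff I {x}"
  shows "toggle P le x I = I"
  using assms interval_closedD[of P le "symdiff I {x}" u v z] by (auto simp: toggle_def)

lemma rowmotion_eq_foldr: "rowmotion P le xs I = foldr (toggle P le) xs I"
proof -
  have "foldr (\<lambda>x f. toggle P le x \<circ> f) xs id I = foldr (toggle P le) xs I" for I
    by (induction xs arbitrary: I) auto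
  then show ?thesis by (simp add: rowmotion_def)
qed

lemma foldr_toggle_fixed:
  "(\<And>x. x \<in> set xs \<Longrightarrow> toggle P le x I = I) \<Longrightarrow> foldr (toggle P le) xs I = I"
  by (induction xs) auto

section \<open>Toggles on the chain\<close>

lemma interval_closed_chain_interval:
  "1 \<le> a \<Longrightarrow> b \<le> n \<Longrightarrow> interval_closed {1..n} (\<le>) {a..b::nat}"
  by (auto simp: interval_closed_def)

lemma IC_chain:
  "IC {1..n} (\<le>) = insert {} {{a..b} | a b. 1 \<le> a \<and> a \<le> b \<and> b \<le> (n::nat)}"
proof (intro equalityI subsetI)
  fix I assume "I \<in> IC {1..n} (\<le>)"
  then have ic: "interval_closed {1..n} (\<le>) I" by (simp add: IC_def)
  show "I \<in> insert {} {{a..b} | a b. 1 \<le> a \<and> a \<le> b \<and> b \<le> n}"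
  proof (cases "I = {}")
    case False
    have sub: "I \<subseteq> {1..n}" using ic by (simp add: interval_closed_def)
    then have fin: "finite I" using finite_subset by blast
    have min: "Min I \<in> I" and max: "Max I \<in> I" using fin False by simp_all
    have bounds: "1 \<le> Min I" "Min I \<le> Max I" "Max I \<le> n"
      using subsetD[OF sub min] subsetD[OF sub max] Min_le[OF fin max] by simp_all
    have "{Min I..Max I} \<subseteq> I"
    proof
      fix z assume z: "z \<in> {Min I..Max I}"
      then have "z \<in> {1..n}" using bounds by simp
      then show "z \<in> I" using interval_closedD[OF ic min max] z by simp
    qed
    moreover have "I \<subseteq> {Min I..Max I}" using Min_le[OF fin] Max_ge[OF fin] by auto
    ultimately have "I = {Min I..Max I}" by blast
    then show ?thesis using bounds by blast
  qed simp
next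
  fix I assume "I \<in> insert {} {{a..b} | a b. 1 \<le> a \<and> a \<le> b \<and> b \<le> n}"
  then show "I \<in> IC {1..n} (\<le>)"
    using interval_closed_chain_interval by (auto simp: IC_def interval_closed_def)
qed

lemma toggle_chain_interval:
  assumes "symdiff {a..b} {x} = {c..d}" "1 \<le> c" "d \<le> n"
  shows "toggle {1..n} (\<le>) x {a..b::nat} = {c..d}"
  using assms interval_closed_chain_interval by (simp add: toggle_eq_symdiff)

lemma toggle_chain_delete_max:
  fixes a b :: nat
  assumes "1 \<le> a" "a \<le> b" "b \<le> n"
  shows "toggle {1..n} (\<le>) b {a..b} = {a..b-1}"
  using assms by (intro toggle_chain_interval) (auto simp: symdiff_def)

lemma toggle_chain_delete_min:
  fixes a b :: nat
  assumes "1 \<le> a" "a \<le> b" "b \<le> n"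
  shows "toggle {1..n} (\<le>) a {a..b} = {a+1..b}"
  using assms by (intro toggle_chain_interval) (auto simp: symdiff_def)

lemma toggle_chain_insert_below:
  fixes a b :: nat
  assumes "1 \<le> a" "a \<le> b" "b \<le> n"
  shows "toggle {1..n} (\<le>) a {a+1..b} = {a..b}"
  using assms by (intro toggle_chain_interval) (auto simp: symdiff_def)

lemma toggle_chain_insert_above:
  fixes a b :: nat
  assumes "1 \<le> a" "a \<le> b + 1" "b < n"
  shows "toggle {1..n} (\<le>) (b+1) {a..b} = {a..b+1}"
  using assms by (intro toggle_chain_interval) (auto simp: symdiff_def)

lemma toggle_chain_nonadjacent:
  assumes "1 \<le> a" "a \<le> b" "b \<le> n" "m \<in> {1..n}" "m + 1 \<noteq> a" "m \<noteq> a" "m \<noteq> b" "m \<noteq> b + 1"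
  shows "toggle {1..n} (\<le>) m {a..b::nat} = {a..b}"
proof -
  consider "m + 1 < a" | "a < m \<and> m < b" | "b + 1 < m" using assms by linarith
  then show ?thesis
  proof cases
    case 1 then show ?thesis
      using assms by (intro toggle_eq_self_if_gap[where u=m and v=a and z="m+1"]) (auto simp: symdiff_singleton)
  next
    case 2 then show ?thesis
      using assms by (intro toggle_eq_self_if_gap[where u=a and v=b and z=m]) (auto simp: symdiff_singleton)
  next
    case 3 then show ?thesis
      using assms by (intro toggle_eq_self_if_gap[where u=a and v=m and z="b+1"]) (auto simp: symdiff_singleton)
  qed
qed

section \<open>Rowmotion on the chain\<close>

abbreviation chain_toggles :: "nat \<Rightarrow> nat list \<Rightarrow> nat set \<Rightarrow> nat set" where
  "chain_toggles n xs \<equiv> foldr (toggle {1..n} (\<le>)) xs"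

lemma chain_row_eq_toggles: "chain_row n = chain_toggles n [1..<n+1]"
  by (simp add: fun_eq_iff chain_row_def rowmotion_eq_foldr)

lemma upt_append: "a \<le> b \<Longrightarrow> b \<le> c \<Longrightarrow> [a..<c] = [a..<b] @ [b..<c]"
  using upt_add_eq_append[of a b "c - b"] by simp

lemma chain_toggles_strip:
  assumes "1 \<le> i" "i \<le> m" "m \<le> n + 1"
  shows "chain_toggles n [m..<n+1] {i..n} = {i..m-1}"
  using assms(3,2)
proof (induction m rule: inc_induct)
  case (step k)
  then have "chain_toggles n [k..<n+1] {i..n} = toggle {1..n} (\<le>) k {i..k}"
    by (simp add: upt_conv_Cons del: upt_Suc)
  also have "\<dots> = {i..k-1}"
    using step assms by (intro toggle_chain_delete_max) auto
  finally show ?case .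
qed simp

lemma chain_toggles_fill:
  assumes "1 \<le> m" "m \<le> i" "i \<le> n + 1"
  shows "chain_toggles n [m..<i] {} = {m..i-1}"
  using assms(2,1)
proof (induction m rule: inc_induct)
  case (step k)
  then have "chain_toggles n [k..<i] {} = toggle {1..n} (\<le>) k {k+1..i-1}"
    by (simp add: upt_conv_Cons del: upt_Suc)
  also have "\<dots> = {k..i-1}"
    using step assms by (intro toggle_chain_insert_below) auto
  finally show ?case .
qed simp

lemma chain_row_empty: "chain_row n {} = {1..n}"
  using chain_toggles_fill[of 1 "n+1" n] by (simp add: chain_row_eq_toggles)

lemma chain_row_full: "chain_row n {1..n} = {}"
  using chain_toggles_strip[of 1 1 n] by (simp add: chain_row_eq_toggles)

lemma chain_row_wrap:
  assumes "2 \<le> i" "i \<le> n"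
  shows "chain_row n {i..n} = {1..i-1}"
proof -
  have "[1..<n+1] = [1..<i] @ [i..<n+1]" using assms by (intro upt_append) auto
  then have "chain_row n {i..n} = chain_toggles n [1..<i] (chain_toggles n [i..<n+1] {i..n})"
    by (simp add: chain_row_eq_toggles)
  also have "chain_toggles n [i..<n+1] {i..n} = {}" using chain_toggles_strip[of i i n] assms by simp
  also have "chain_toggles n [1..<i] {} = {1..i-1}" using chain_toggles_fill[of 1 i n] assms by simp
  finally show ?thesis .
qed

lemma chain_row_shift:
  assumes "1 \<le> i" "i \<le> j" "j < n"
  shows "chain_row n {i..j} = {i+1..j+1}"
proof -
  have "[1..<n+1] = [1..<i] @ i # [i+1..<j+1] @ (j+1) # [j+2..<n+1]"
    using assms upt_append[of 1 i "n+1"] upt_append[of "i+1" "j+1" "n+1"]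
      upt_conv_Cons[of i "n+1"] upt_conv_Cons[of "j+1" "n+1"]
    by (simp del: upt_Suc)
  then have "chain_row n {i..j} = chain_toggles n [1..<i] (toggle {1..n} (\<le>) i
      (chain_toggles n [i+1..<j+1] (toggle {1..n} (\<le>) (j+1) (chain_toggles n [j+2..<n+1] {i..j}))))"
    by (simp add: chain_row_eq_toggles)
  also have "chain_toggles n [j+2..<n+1] {i..j} = {i..j}"
    using assms by (intro foldr_toggle_fixed toggle_chain_nonadjacent) auto
  also have "toggle {1..n} (\<le>) (j+1) {i..j} = {i..j+1}"
    using assms by (intro toggle_chain_insert_above) auto
  also have "chain_toggles n [i+1..<j+1] {i..j+1} = {i..j+1}"
    using assms by (intro foldr_toggle_fixed toggle_chain_nonadjacent) auto
  also have "toggle {1..n} (\<le>) i {i..j+1} = {i+1..j+1}"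
    using assms by (intro toggle_chain_delete_min) auto
  also have "chain_toggles n [1..<i] {i+1..j+1} = {i+1..j+1}"
    using assms by (intro foldr_toggle_fixed toggle_chain_nonadjacent) auto
  finally show ?thesis .
qed

lemma orbit_of_self: "x \<in> orbit_of f x"
  unfolding orbit_of_def by (auto intro: exI[of _ 0])

lemma orbit_of_step: "y \<in> orbit_of f x \<Longrightarrow> f y \<in> orbit_of f x"
  unfolding orbit_of_def by (auto intro: exI[of _ "Suc _"])

lemma orbit_of_trans: "y \<in> orbit_of f x \<Longrightarrow> z \<in> orbit_of f y \<Longrightarrow> z \<in> orbit_of f x"
  unfolding orbit_of_def by (auto intro: exI[of _ "_ + _"] simp: funpow_add)

lemma orbit_of_subset: "x \<in> S \<Longrightarrow> f ` S \<subseteq> S \<Longrightarrow> orbit_of f x \<subseteq> S"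
proof
  fix y assume "x \<in> S" "f ` S \<subseteq> S" "y \<in> orbit_of f x"
  then obtain m where "y = (f ^^ m) x" unfolding orbit_of_def by auto
  moreover have "(f ^^ m) x \<in> S" using \<open>x \<in> S\<close> \<open>f ` S \<subseteq> S\<close> by (induction m) auto
  ultimately show "y \<in> S" by simp
qed

lemma orbit_of_swap: "f x = y \<Longrightarrow> f y = x \<Longrightarrow> orbit_of f x = {x, y}"
  using orbit_of_self[of x f] orbit_of_step[OF orbit_of_self, of f x]
  by (intro equalityI orbit_of_subset) auto

lemma map_order_dvd: "(\<And>Y. Y \<in> orbits f S \<Longrightarrow> card Y dvd m) \<Longrightarrow> map_order f S dvd m"
  unfolding map_order_def by (auto intro: Lcm_least)

section \<open>Rowmotion orbits of intervals\<close>

definition intervals_of_length :: "nat \<Rightarrow> nat \<Rightarrow> nat set set" where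
  "intervals_of_length n L = {{a..b} | a b. 1 \<le> a \<and> b \<le> n \<and> b + 1 = a + L}"

lemma intervals_of_lengthI:
  "1 \<le> a \<Longrightarrow> b \<le> n \<Longrightarrow> b + 1 = a + L \<Longrightarrow> {a..b} \<in> intervals_of_length n L"
  unfolding intervals_of_length_def by blast

lemma intervals_of_length_eq:
  "1 \<le> L \<Longrightarrow> intervals_of_length n L = {{i..i+L-1} | i. 1 \<le> i \<and> i + L - 1 \<le> n}"
  unfolding intervals_of_length_def by (safe; force)

lemma intervals_of_length_image:
  "1 \<le> L \<Longrightarrow> intervals_of_length n L = (\<lambda>i. {i..i+L-1}) ` {1..n+1-L}"
  unfolding intervals_of_length_eq by (auto simp del: Icc_eq_Icc intro!: exI)

lemma card_intervals_of_length:
  assumes "1 \<le> L" "L \<le> n"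
  shows "card (intervals_of_length n L) = n + 1 - L"
proof -
  have "inj_on (\<lambda>i. {i..i+L-1}) {1..n+1-L}"
    using assms by (intro inj_onI) (simp, arith)
  then show ?thesis using assms by (simp add: intervals_of_length_image card_image)
qed

lemma card_mem_intervals_of_length: "X \<in> intervals_of_length n L \<Longrightarrow> card X = L"
  by (auto simp: intervals_of_length_def)

lemma card_intervals_of_length_union:
  assumes "1 \<le> k" "k < n" "2 * k \<noteq> n"
  shows "card (intervals_of_length n k \<union> intervals_of_length n (n-k)) = n + 2"
proof -
  have "k \<noteq> n - k" using assms by simp
  then have "intervals_of_length n k \<inter> intervals_of_length n (n-k) = {}"
    by (auto dest!: card_mem_intervals_of_length)
  then show ?thesis
    using assms card_intervals_of_length[of k n] card_intervals_of_length[of "n-k" n]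
    by (simp add: card_Un_disjoint intervals_of_length_image)
qed

lemma orbit_b_eq:
  "1 \<le> k \<Longrightarrow> k < n \<Longrightarrow> orbit_b n k = intervals_of_length n k \<union> intervals_of_length n (n-k)"
  by (simp add: orbit_b_def intervals_of_length_eq)

lemma orbit_c_eq: "2 \<le> n \<Longrightarrow> orbit_c n = intervals_of_length n (n div 2)"
  by (simp add: orbit_c_def intervals_of_length_eq)

lemma chain_row_shift_in_orbit:
  "1 \<le> a \<Longrightarrow> a \<le> b \<Longrightarrow> b + d \<le> n \<Longrightarrow> {a+d..b+d} \<in> orbit_of (chain_row n) {a..b}"
proof (induction d)
  case (Suc d)
  have "chain_row n {a+d..b+d} = {a+d+1..b+d+1}" using Suc.prems by (intro chain_row_shift) auto
  then show ?case using orbit_of_step[OF Suc.IH] Suc.prems by simp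
qed (simp add: orbit_of_self)

lemma intervals_of_length_subset_orbit:
  assumes "1 \<le> L"
  shows "intervals_of_length n L \<subseteq> orbit_of (chain_row n) {1..L}"
proof
  fix X assume "X \<in> intervals_of_length n L"
  then obtain a b where "X = {a..b}" "1 \<le> a" "b \<le> n" "b + 1 = a + L"
    unfolding intervals_of_length_def by blast
  then have "X = {1 + (a - 1)..L + (a - 1)}" "L + (a - 1) \<le> n" by auto
  then show "X \<in> orbit_of (chain_row n) {1..L}"
    using assms by (simp only: chain_row_shift_in_orbit)
qed

lemma chain_row_intervals_of_length:
  assumes "1 \<le> L" "L < n" "X \<in> intervals_of_length n L"
  shows "chain_row n X \<in> intervals_of_length n L \<union> intervals_of_length n (n-L)"
proof -
  obtain a b where X: "X = {a..b}" "1 \<le> a" "b \<le> n" "b + 1 = a + L"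
    using assms(3) unfolding intervals_of_length_def by blast
  show ?thesis
  proof (cases "b < n")
    case True
    then show ?thesis
      using assms X chain_row_shift[of a b n] intervals_of_lengthI[of "a+1" "b+1" n L] by simp
  next
    case False
    then have "X = {a..n}" "a - 1 = n - L" using assms X by auto
    then show ?thesis
      using assms X chain_row_wrap[of a n] intervals_of_lengthI[of 1 "n-L" n "n-L"] by simp
  qed
qed

lemma orbit_chain_row_interval:
  assumes L: "1 \<le> L" "L < n" and X: "X \<in> intervals_of_length n L"
  shows "orbit_of (chain_row n) X = intervals_of_length n L \<union> intervals_of_length n (n-L)"
    (is "?O = ?U")
proof
  have "1 \<le> n - L" "n - L < n" "n - (n - L) = L" using L by auto
  then have "chain_row n Y \<in> ?U" if "Y \<in> ?U" for Y
    using that chain_row_intervals_of_length[OF L(1,2), of Y]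
      chain_row_intervals_of_length[of "n-L" n Y] by auto
  then have "chain_row n ` ?U \<subseteq> ?U" by blast
  then show "?O \<subseteq> ?U" using X by (intro orbit_of_subset) auto
  obtain a b where ab: "X = {a..b}" "1 \<le> a" "b \<le> n" "b + 1 = a + L"
    using X unfolding intervals_of_length_def by blast
  have "{a + (n - b)..b + (n - b)} \<in> ?O"
    unfolding ab(1) using L ab by (intro chain_row_shift_in_orbit) auto
  moreover have "a + (n - b) = n + 1 - L" "b + (n - b) = n" using ab by auto
  ultimately have "{n+1-L..n} \<in> ?O" by simp
  moreover have "chain_row n {n+1-L..n} = {1..n-L}" using L by (simp add: chain_row_wrap)
  ultimately have "{1..n-L} \<in> ?O" by (metis orbit_of_step)
  moreover have "intervals_of_length n (n-L) \<subseteq> orbit_of (chain_row n) {1..n-L}"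
    using L by (intro intervals_of_length_subset_orbit) simp
  ultimately have low: "intervals_of_length n (n-L) \<subseteq> ?O" by (blast intro: orbit_of_trans)
  have "{L+1..n} \<in> ?O" using L by (intro subsetD[OF low] intervals_of_lengthI) auto
  moreover have "chain_row n {L+1..n} = {1..L}" using L by (simp add: chain_row_wrap)
  ultimately have "{1..L} \<in> ?O" by (metis orbit_of_step)
  then have "intervals_of_length n L \<subseteq> ?O"
    using intervals_of_length_subset_orbit[OF L(1), of n] by (blast intro: orbit_of_trans)
  with low show "?U \<subseteq> ?O" by blast
qed

lemma orbit_chain_row_interval_cases:
  assumes "1 \<le> a" "a \<le> b" "b \<le> n" "b + 1 - a < n"
  obtains k where "1 \<le> k" "2 * k < n" "orbit_of (chain_row n) {a..b} = orbit_b n k"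
  | "even n" "orbit_of (chain_row n) {a..b} = orbit_c n"
proof -
  define L where "L = b + 1 - a"
  have L: "1 \<le> L" "L < n" "{a..b} \<in> intervals_of_length n L"
    using assms by (auto simp: L_def intro: intervals_of_lengthI)
  then have orbit:
    "orbit_of (chain_row n) {a..b} = intervals_of_length n L \<union> intervals_of_length n (n-L)"
    by (simp add: orbit_chain_row_interval)
  consider "2 * L < n" | "2 * L = n" | "n < 2 * L" by linarith
  then show ?thesis
  proof cases
    case 1 then show ?thesis using L orbit that(1) by (simp add: orbit_b_eq)
  next
    case 2
    then have "even n" "2 \<le> n" "n - L = L" "n div 2 = L" using L by auto
    then show ?thesis using orbit that(2) by (simp add: orbit_c_eq)
  next
    case 3
    then have "1 \<le> n - L" "2 * (n - L) < n" "n - (n - L) = L" using L by auto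
    then show ?thesis using L orbit that(1)[of "n - L"] by (simp add: orbit_b_eq Un_commute)
  qed
qed

lemma orbits_chain_row:
  assumes "1 \<le> n"
  shows "orbits (chain_row n) (IC {1..n} (\<le>)) =
    {{{}, {1..n}}} \<union> {orbit_b n k | k. 1 \<le> k \<and> 2 * k < n} \<union> (if even n then {orbit_c n} else {})"
    (is "?L = ?R")
proof
  have pair: "orbit_of (chain_row n) {} = {{}, {1..n}}" "orbit_of (chain_row n) {1..n} = {{}, {1..n}}"
    using orbit_of_swap[OF chain_row_empty[of n] chain_row_full[of n]]
      orbit_of_swap[OF chain_row_full[of n] chain_row_empty[of n]]
    by (simp_all add: insert_commute)
  show "?L \<subseteq> ?R"
  proof
    fix Y assume "Y \<in> ?L"
    then obtain X where X: "X \<in> IC {1..n} (\<le>)" and Y: "Y = orbit_of (chain_row n) X"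
      unfolding orbits_def by blast
    show "Y \<in> ?R"
    proof (cases "X = {}")
      case False
      then obtain a b where ab: "X = {a..b}" "1 \<le> a" "a \<le> b" "b \<le> n"
        using X unfolding IC_chain by blast
      show ?thesis
      proof (cases "b + 1 - a < n")
        case True
        then show ?thesis
        proof (rule orbit_chain_row_interval_cases[OF ab(2-4)])
          fix k assume "1 \<le> k" "2 * k < n" "orbit_of (chain_row n) {a..b} = orbit_b n k"
          then show ?thesis using Y ab(1) by blast
        qed (use Y ab(1) in simp)
      next
        case False
        then have "X = {1..n}" using ab by auto
        then show ?thesis using Y pair by simp
      qed
    qed (use Y pair in simp)
  qed
  have IC: "{} \<in> IC {1..n} (\<le>)" "\<And>k. 1 \<le> k \<Longrightarrow> k \<le> n \<Longrightarrow> {1..k} \<in> IC {1..n} (\<le>)"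
    unfolding IC_chain by blast+
  have "orbit_b n k \<in> ?L" if "1 \<le> k" "2 * k < n" for k
  proof -
    have "orbit_b n k = orbit_of (chain_row n) {1..k}"
      using that by (simp add: orbit_b_eq orbit_chain_row_interval intervals_of_lengthI)
    then show ?thesis using IC(2)[of k] that unfolding orbits_def by simp
  qed
  moreover have "orbit_c n \<in> ?L" if "even n"
  proof -
    have "orbit_c n = orbit_of (chain_row n) {1..n div 2}"
      using that assms by (auto simp: orbit_c_eq orbit_chain_row_interval intervals_of_lengthI)
    moreover have "1 \<le> n div 2" using that assms by presburger
    ultimately show ?thesis using IC(2)[of "n div 2"] unfolding orbits_def by simp
  qed
  moreover have "{{}, {1..n}} \<in> ?L" using IC(1) pair unfolding orbits_def by (metis image_eqI)
  ultimately show "?R \<subseteq> ?L" by auto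
qed

lemma card_orbit_b: "1 \<le> k \<Longrightarrow> 2 * k < n \<Longrightarrow> card (orbit_b n k) = n + 2"
  by (simp add: orbit_b_eq card_intervals_of_length_union)

lemma card_orbit_c: "even n \<Longrightarrow> 2 \<le> n \<Longrightarrow> card (orbit_c n) = (n + 2) div 2"
  by (auto simp: orbit_c_eq card_intervals_of_length)

lemma card_orbit_b_indices: "card {k::nat. 1 \<le> k \<and> 2 * k < n} = (n - 1) div 2"
proof -
  have "{k::nat. 1 \<le> k \<and> 2 * k < n} = {1..(n - 1) div 2}" by auto
  then show ?thesis by simp
qed

lemma map_order_chain_row_dvd:
  assumes "1 \<le> n" "2 dvd m" "n + 2 dvd m" "even n \<Longrightarrow> (n + 2) div 2 dvd m"
  shows "map_order (chain_row n) (IC {1..n} (\<le>)) dvd m"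
proof (rule map_order_dvd)
  fix Y assume "Y \<in> orbits (chain_row n) (IC {1..n} (\<le>))"
  then consider "Y = {{}, {1..n}}" | k where "Y = orbit_b n k" "1 \<le> k" "2 * k < n"
    | "even n" "Y = orbit_c n"
    unfolding orbits_chain_row[OF assms(1)] by (auto split: if_splits)
  then show "card Y dvd m"
  proof cases
    case 1
    then have "card Y = 2" using assms(1) by auto
    then show ?thesis using assms(2) by simp
  next
    case 2
    then show ?thesis using assms(3) by (simp add: card_orbit_b)
  next
    case 3
    then have "2 \<le> n" using assms(1) by presburger
    then show ?thesis using 3 assms(4) by (simp add: card_orbit_c)
  qed
qed

theorem theorem3p2:
  fixes n :: nat
  assumes "n \<ge> 1"
  shows "chain_row n {} = {1..n} \<and> chain_row n {1..n} = {}
    \<and> (\<forall>i j. 1 \<le> i \<and> i \<le> j \<and> j < n \<longrightarrow> chain_row n {i..j} = {i+1..j+1})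
    \<and> (\<forall>i. 2 \<le> i \<and> i \<le> n \<longrightarrow> chain_row n {i..n} = {1..i-1})
    \<and> orbits (chain_row n) (IC {1..n} (\<le>)) =
        {{{}, {1..n}}} \<union> {orbit_b n k | k. 1 \<le> k \<and> 2 * k < n}
        \<union> (if even n then {orbit_c n} else {})
    \<and> card {{}, {1..n}} = 2
    \<and> card {k::nat. 1 \<le> k \<and> 2 * k < n} = (n - 1) div 2
    \<and> (\<forall>k. 1 \<le> k \<and> 2 * k < n \<longrightarrow> card (orbit_b n k) = n + 2)
    \<and> (even n \<longrightarrow> card (orbit_c n) = (n + 2) div 2)
    \<and> (odd n \<longrightarrow> map_order (chain_row n) (IC {1..n} (\<le>)) dvd 2 * (n + 2))
    \<and> (even n \<longrightarrow> map_order (chain_row n) (IC {1..n} (\<le>)) dvd n + 2)"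
proof -
  have even_ge_2: "even n \<Longrightarrow> 2 \<le> n" using assms by presburger
  have half_dvd: "(n + 2) div 2 dvd n + 2" if "even n"
    using that dvd_triv_left[of "(n + 2) div 2" 2] by simp
  have "n + 2 dvd 2 * (n + 2)" by (rule dvd_triv_right)
  then have order_odd: "odd n \<longrightarrow> map_order (chain_row n) (IC {1..n} (\<le>)) dvd 2 * (n + 2)"
    using assms by (intro impI map_order_chain_row_dvd) auto
  have order_even: "even n \<longrightarrow> map_order (chain_row n) (IC {1..n} (\<le>)) dvd n + 2"
    using assms half_dvd by (intro impI map_order_chain_row_dvd) auto
  show ?thesis
    by (intro conjI order_odd order_even orbits_chain_row[OF assms] chain_row_empty chain_row_full
        card_orbit_b_indices allI impI chain_row_shift chain_row_wrap card_orbit_b card_orbit_c)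
      (use assms even_ge_2 in auto)
qed

end
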